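(* Let $G$ be a group satisfying the property $\mathsf{FM}$ and $\nu$ a conjugation-invariant pseudo-norm on $G$. Then for any $\mathtt{g}\in A_G$ and any real numbers $\lambda_1,\lambda_2$, \[ \|\bar{\mathtt{g}}^{(\lambda_1+\lambda_2)}\cdot\mathtt{g}^{(\lambda_1)}\cdot\mathtt{g}^{(\lambda_2)}\|_\nu=0. \]
   Context: A conjugation-invariant pseudo-norm on a group $G$ is a function $\nu\colon G\to\mathbb{R}_{\ge0}$ with $\nu(1)=0$, $\nu(f)=\nu(f^{-1})$, $\nu(fg)\le\nu(f)+\nu(g)$ and $\nu(gfg^{-1})=\nu(f)$ for all $f,g\in G$. Property $\mathsf{FM}$: for a subgroup $H\le G$, let $\nu_H(f)$ be the minimal $k$ such that $f=g_1h_1g_1^{-1}\cdots g_kh_kg_k^{-1}$ ($g_i\in G,h_i\in H$), $\infty$ if none; for $K\subset G$ let $\mathrm{D}^f_H(K)$ be the set of $h_0\in G$ such that for all $g_1,\dots,g_k\in G$ there is $h\in G$ with every element of $hh_0h^{-1}K(hh_0h^{-1})^{-1}$ commuting with every element of $\bigcup_i g_iHg_i^{-1}$. $(G,H)$ satisfies $\mathsf{FM}$ if $\nu_H<\infty$ on $G$ and $\mathrm{D}^f_H(h_1Hh_1^{-1}\cup\dots\cup h_kHh_k^{-1})\ne\emptyset$ for all $h_1,\dots,h_k\in G$; $G$ satisfies $\mathsf{FM}$ if some $(G,H)$ does. $A_G=\coprod_{k\ge0}(G\times\mathbb{R})^k$, elements written as formal words $g_1^{s_1}\cdots g_k^{s_k}$,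 empty word $1$. For $\mathtt{g}=g_1^{s_1}\cdots g_k^{s_k}$: $\mathtt{g}\cdot\mathtt{h}$ is concatenation, $\bar{\mathtt{g}}=g_k^{-s_k}\cdots g_1^{-s_1}$, $\mathtt{g}^{(\lambda)}=g_1^{\lambda s_1}\cdots g_k^{\lambda s_k}$, and $\|\mathtt{g}\|_\nu=\lim_{n\to\infty}\frac1n\nu(g_1^{[s_1n]}\cdots g_k^{[s_kn]})$ ($[\cdot]$ integer part; the limit exists under $\mathsf{FM}$), $\|1\|_\nu=0$. *)

theory Defs
  imports Complex_Main "HOL-Algebra.Group"
begin

definition conj_inv_pseudo_norm :: "('a, 'b) monoid_scheme \<Rightarrow> ('a \<Rightarrow> real) \<Rightarrow> bool" where
  "conj_inv_pseudo_norm G \<nu> \<longleftrightarrow>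
     (\<forall>f\<in>carrier G. \<nu> f \<ge> 0) \<and>
     \<nu> \<one>\<^bsub>G\<^esub> = 0 \<and>
     (\<forall>f\<in>carrier G. \<nu> f = \<nu> (inv\<^bsub>G\<^esub> f)) \<and>
     (\<forall>f\<in>carrier G. \<forall>g\<in>carrier G. \<nu> (f \<otimes>\<^bsub>G\<^esub> g) \<le> \<nu> f + \<nu> g) \<and>
     (\<forall>f\<in>carrier G. \<forall>g\<in>carrier G. \<nu> (g \<otimes>\<^bsub>G\<^esub> f \<otimes>\<^bsub>G\<^esub> inv\<^bsub>G\<^esub> g) = \<nu> f)"

definition gprod :: "('a, 'b) monoid_scheme \<Rightarrow> 'a list \<Rightarrow> 'a" where
  "gprod G xs = foldr (\<lambda>x acc. x \<otimes>\<^bsub>G\<^esub> acc) xs \<one>\<^bsub>G\<^esub>"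

definition conjg :: "('a, 'b) monoid_scheme \<Rightarrow> 'a \<Rightarrow> 'a \<Rightarrow> 'a" where
  "conjg G g h = g \<otimes>\<^bsub>G\<^esub> h \<otimes>\<^bsub>G\<^esub> inv\<^bsub>G\<^esub> g"

definition conj_set :: "('a, 'b) monoid_scheme \<Rightarrow> 'a \<Rightarrow> 'a set \<Rightarrow> 'a set" where
  "conj_set G g H = conjg G g ` H"

text \<open>f is a product of k conjugates of elements of H, i.e. nu_H(f) \<le> k
  (nu_H(f) is the least such k).\<close>
definition prod_of_conjugates :: "('a, 'b) monoid_scheme \<Rightarrow> 'a set \<Rightarrow> nat \<Rightarrow> 'a \<Rightarrow> bool" where
  "prod_of_conjugates G H k f \<longleftrightarrow>
     (\<exists>gs hs. length gs = k \<and> length hs = k \<and> set gs \<subseteq> carrier G \<and> set hs \<subseteq> H \<and>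
        f = gprod G (map2 (conjg G) gs hs))"

definition nuH_finite :: "('a, 'b) monoid_scheme \<Rightarrow> 'a set \<Rightarrow> bool" where
  "nuH_finite G H \<longleftrightarrow> (\<forall>f\<in>carrier G. \<exists>k. prod_of_conjugates G H k f)"

definition Df :: "('a, 'b) monoid_scheme \<Rightarrow> 'a set \<Rightarrow> 'a set \<Rightarrow> 'a set" where
  "Df G H K = {h0 \<in> carrier G.
     \<forall>gs. set gs \<subseteq> carrier G \<longrightarrow>
       (\<exists>h\<in>carrier G.
          \<forall>x\<in>conj_set G (conjg G h h0) K. \<forall>y\<in>(\<Union>g\<in>set gs. conj_set G g H).
             x \<otimes>\<^bsub>G\<^esub> y = y \<otimes>\<^bsub>G\<^esub> x)}"

definition FM_pair :: "('a, 'b) monoid_scheme \<Rightarrow> 'a set \<Rightarrow> bool" where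
  "FM_pair G H \<longleftrightarrow> subgroup H G \<and> nuH_finite G H \<and>
     (\<forall>hs. set hs \<subseteq> carrier G \<longrightarrow> Df G H (\<Union>h\<in>set hs. conj_set G h H) \<noteq> {})"

definition FM :: "('a, 'b) monoid_scheme \<Rightarrow> bool" where
  "FM G \<longleftrightarrow> (\<exists>H. FM_pair G H)"

text \<open>A word g_1^{s_1} ... g_k^{s_k} is the list [(g_1,s_1),...,(g_k,s_k)];
  concatenation is list append, the empty word is [].\<close>
type_synonym 'a word = "('a \<times> real) list"

definition word_bar :: "'a word \<Rightarrow> 'a word" where
  "word_bar w = rev (map (\<lambda>(g, s). (g, - s)) w)"

definition word_scale :: "real \<Rightarrow> 'a word \<Rightarrow> 'a word" where
  "word_scale c w = map (\<lambda>(g, s). (g, c * s)) w"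

definition in_AG :: "('a, 'b) monoid_scheme \<Rightarrow> 'a word \<Rightarrow> bool" where
  "in_AG G w \<longleftrightarrow> (\<forall>(g, s)\<in>set w. g \<in> carrier G)"

definition word_eval :: "('a, 'b) monoid_scheme \<Rightarrow> 'a word \<Rightarrow> nat \<Rightarrow> 'a" where
  "word_eval G w n = gprod G (map (\<lambda>(g, s). g [^]\<^bsub>G\<^esub> (\<lfloor>s * real n\<rfloor>)) w)"

definition word_seq :: "('a, 'b) monoid_scheme \<Rightarrow> ('a \<Rightarrow> real) \<Rightarrow> 'a word \<Rightarrow> nat \<Rightarrow> real" where
  "word_seq G \<nu> w n = \<nu> (word_eval G w n) / real n"

definition word_norm :: "('a, 'b) monoid_scheme \<Rightarrow> ('a \<Rightarrow> real) \<Rightarrow> 'a word \<Rightarrow> real" where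
  "word_norm G \<nu> w = lim (word_seq G \<nu> w)"

end

(*
  Under FM the finitely many letters of w lie in a subgroup L generated by finitely many
  conjugates of H, and some t conjugates L into its own centralizer. Hence every commutator
  of two elements of L has norm at most 4 \<nu>(t). At time n, the word evaluates (up to
  conjugation) to \<Prod> g_i^{a_i} \<Prod> g_i^{b_i} (\<Prod> g_i^{d_i})^{-1} with
  a_i + b_i - d_i \<in> {-2, -1, 0}; moving the letters past each other one at a time costs one
  commutator and one short power per letter, so the norm stays bounded and its quotient by n
  tends to 0.
*)

theory Submission
  imports Defs "HOL-Algebra.Generated_Groups"
begin

context group
begin

lemma r_inv_cancel_left: "x \<in> carrier G \<Longrightarrow> y \<in> carrier G \<Longrightarrow> x \<otimes> (inv x \<otimes> y) = y"
  by (simp add: m_assoc[symmetric])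

lemma l_inv_cancel_left: "x \<in> carrier G \<Longrightarrow> y \<in> carrier G \<Longrightarrow> inv x \<otimes> (x \<otimes> y) = y"
  by (simp add: m_assoc[symmetric])

lemma gprod_Nil [simp]: "gprod G [] = \<one>"
  by (simp add: gprod_def)

lemma gprod_Cons [simp]: "gprod G (x # xs) = x \<otimes> gprod G xs"
  by (simp add: gprod_def)

lemma gprod_closed [intro, simp]: "set xs \<subseteq> carrier G \<Longrightarrow> gprod G xs \<in> carrier G"
  by (induction xs) auto

lemma gprod_append:
  "set xs \<subseteq> carrier G \<Longrightarrow> set ys \<subseteq> carrier G \<Longrightarrow> gprod G (xs @ ys) = gprod G xs \<otimes> gprod G ys"
  by (induction xs) (auto simp: m_assoc)

lemma gprod_rev:
  "set xs \<subseteq> carrier G \<Longrightarrow> gprod G (rev xs) = inv (gprod G (map (\<lambda>x. inv x) xs))"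
proof (induction xs)
  case (Cons x xs)
  then have "gprod G (map (\<lambda>x. inv x) xs) \<in> carrier G"
    by (intro gprod_closed) auto
  with Cons show ?case
    by (simp add: gprod_append inv_mult_group)
qed simp

lemma subgroup_gprod_closed: "subgroup L G \<Longrightarrow> set xs \<subseteq> L \<Longrightarrow> gprod G xs \<in> L"
  by (induction xs) (auto simp: subgroup.one_closed subgroup.m_closed)

definition centralizer :: "'a set \<Rightarrow> 'a set" where
  "centralizer S = {z \<in> carrier G. \<forall>s\<in>S. z \<otimes> s = s \<otimes> z}"

lemma subgroup_centralizer:
  assumes "S \<subseteq> carrier G"
  shows "subgroup (centralizer S) G"
proof (rule subgroupI)
  fix a assume a: "a \<in> centralizer S"
  show "inv a \<in> centralizer S"
    unfolding centralizer_def
  proof safe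
    fix s assume "s \<in> S"
    with a assms have "a \<in> carrier G" "s \<in> carrier G" "s \<otimes> a = a \<otimes> s"
      by (auto simp: centralizer_def)
    then show "inv a \<otimes> s = s \<otimes> inv a"
      by (metis inv_solve_left inv_solve_right m_assoc inv_closed m_closed)
  qed (use a in \<open>simp add: centralizer_def\<close>)
next
  fix a b assume "a \<in> centralizer S" "b \<in> centralizer S"
  with assms show "a \<otimes> b \<in> centralizer S"
    by (auto simp: centralizer_def subset_iff) (metis m_assoc)
qed (use assms in \<open>auto simp: centralizer_def intro!: exI[of _ \<one>]\<close>)

lemma generate_commute:
  assumes A: "A \<subseteq> carrier G" and B: "B \<subseteq> carrier G"
    and comm: "\<And>a b. a \<in> A \<Longrightarrow> b \<in> B \<Longrightarrow> a \<otimes> b = b \<otimes> a"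
    and a: "a \<in> generate G A" and b: "b \<in> generate G B"
  shows "a \<otimes> b = b \<otimes> a"
proof -
  have "generate G A \<subseteq> centralizer B"
    using A comm by (intro generate_subgroup_incl subgroup_centralizer B) (auto simp: centralizer_def)
  then have "B \<subseteq> centralizer (generate G A)"
    using B by (auto simp: centralizer_def)
  then have "generate G B \<subseteq> centralizer (generate G A)"
    by (intro generate_subgroup_incl subgroup_centralizer generate_incl A)
  with a b show ?thesis
    by (auto simp: centralizer_def)
qed

lemma group_hom_conjg: "t \<in> carrier G \<Longrightarrow> group_hom G G (conjg G t)"
  by (intro group_hom.intro group_hom_axioms.intro is_group homI)
     (auto simp: conjg_def m_assoc inv_solve_left)

lemma conj_set_generate:
  "t \<in> carrier G \<Longrightarrow> K \<subseteq> carrier G \<Longrightarrow> conj_set G t (generate G K) = generate G (conj_set G t K)"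
  unfolding conj_set_def by (simp add: group_hom.generate_img[OF group_hom_conjg])

lemma conj_set_closed: "g \<in> carrier G \<Longrightarrow> H \<subseteq> carrier G \<Longrightarrow> conj_set G g H \<subseteq> carrier G"
  by (auto simp: conj_set_def conjg_def)

lemma prod_of_conjugates_in_generate:
  assumes H: "subgroup H G" and f: "prod_of_conjugates G H k f"
  obtains gs where "set gs \<subseteq> carrier G" "f \<in> generate G (\<Union>g\<in>set gs. conj_set G g H)"
proof -
  from f obtain gs hs where gs: "set gs \<subseteq> carrier G" and hs: "set hs \<subseteq> H"
    and f_eq: "f = gprod G (map2 (conjg G) gs hs)"
    unfolding prod_of_conjugates_def by blast
  let ?K = "\<Union>g\<in>set gs. conj_set G g H"
  have "?K \<subseteq> carrier G"
    using gs subgroup.subset[OF H] by (auto dest: conj_set_closed)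
  moreover have "set (map2 (conjg G) gs hs) \<subseteq> ?K"
    using hs by (fastforce simp: conj_set_def dest: set_zip_leftD set_zip_rightD)
  ultimately have "f \<in> generate G ?K"
    unfolding f_eq by (meson generate.incl generate_is_subgroup subgroup_gprod_closed subset_iff)
  with gs show thesis
    by (rule that)
qed

lemma nuH_finite_in_generate:
  assumes H: "subgroup H G" and fin: "nuH_finite G H" and fs: "set fs \<subseteq> carrier G"
  obtains gs where "set gs \<subseteq> carrier G" "set fs \<subseteq> generate G (\<Union>g\<in>set gs. conj_set G g H)"
  using fs
proof (induction fs arbitrary: thesis)
  case Nil
  show ?case
    by (rule Nil.prems(1)[of "[]"]) auto
next
  case (Cons f fs)
  obtain gs where gs: "set gs \<subseteq> carrier G" "set fs \<subseteq> generate G (\<Union>g\<in>set gs. conj_set G g H)"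
    using Cons by auto
  obtain k where "prod_of_conjugates G H k f"
    using fin Cons.prems(2) unfolding nuH_finite_def by auto
  then obtain gs' where gs': "set gs' \<subseteq> carrier G" "f \<in> generate G (\<Union>g\<in>set gs'. conj_set G g H)"
    by (rule prod_of_conjugates_in_generate[OF H])
  have "generate G (\<Union>g\<in>set hs. conj_set G g H) \<subseteq> generate G (\<Union>g\<in>set (gs @ gs'). conj_set G g H)"
    if "set hs \<subseteq> set (gs @ gs')" for hs
    using that by (intro mono_generate) auto
  then show ?case
    using gs gs' by (intro Cons.prems(1)[of "gs @ gs'"]) auto
qed

definition displaces :: "'a \<Rightarrow> 'a set \<Rightarrow> bool" where
  "displaces t L \<longleftrightarrow> (\<forall>x\<in>L. \<forall>y\<in>L. conjg G t y \<otimes> x = x \<otimes> conjg G t y)"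

lemma FM_pair_displaces:
  assumes FM: "FM_pair G H" and fs: "set fs \<subseteq> carrier G"
  obtains L t where "subgroup L G" "t \<in> carrier G" "displaces t L" "set fs \<subseteq> L"
proof -
  have H: "subgroup H G" and fin: "nuH_finite G H"
    and Df: "\<And>hs. set hs \<subseteq> carrier G \<Longrightarrow> Df G H (\<Union>h\<in>set hs. conj_set G h H) \<noteq> {}"
    using FM unfolding FM_pair_def by auto
  obtain gs where gs: "set gs \<subseteq> carrier G" and fs_gen: "set fs \<subseteq> generate G (\<Union>g\<in>set gs. conj_set G g H)"
    using nuH_finite_in_generate[OF H fin fs] .
  define K where "K = (\<Union>g\<in>set gs. conj_set G g H)"
  have K: "K \<subseteq> carrier G"
    using gs subgroup.subset[OF H] by (auto simp: K_def dest: conj_set_closed)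
  \<comment> \<open>The conjugators \<open>gs\<close> defining \<open>K\<close> also serve as the \<open>g\<^sub>i\<close> in the definition of \<open>Df\<close>.\<close>
  obtain h0 where "h0 \<in> Df G H K"
    using Df[OF gs] unfolding K_def by blast
  then obtain h where h0: "h0 \<in> carrier G" and h: "h \<in> carrier G"
    and comm: "\<forall>x\<in>conj_set G (conjg G h h0) K. \<forall>y\<in>K. x \<otimes> y = y \<otimes> x"
    using gs unfolding Df_def K_def by blast
  define t where "t = conjg G h h0"
  have t: "t \<in> carrier G"
    using h h0 by (simp add: t_def conjg_def)
  have "displaces t (generate G K)"
    unfolding displaces_def
  proof (intro ballI)
    fix x y assume x: "x \<in> generate G K" and y: "y \<in> generate G K"
    then have y': "conjg G t y \<in> generate G (conj_set G t K)"
      using conj_set_generate[OF t K] by (auto simp: conj_set_def)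
    have tK: "conj_set G t K \<subseteq> carrier G"
      using t K by (rule conj_set_closed)
    show "conjg G t y \<otimes> x = x \<otimes> conjg G t y"
      by (rule generate_commute[OF tK K _ y' x]) (use comm in \<open>unfold t_def, blast\<close>)
  qed
  with t show thesis
    using fs_gen generate_is_subgroup[OF K] by (intro that) (auto simp: K_def)
qed

end

lemma floor_add_floor_minus_ceiling_bound:
  fixes x y :: real
  shows "\<bar>\<lfloor>x\<rfloor> + \<lfloor>y\<rfloor> - \<lceil>x + y\<rceil>\<bar> \<le> 2"
proof -
  have "real_of_int \<lfloor>x\<rfloor> \<le> x" "x < real_of_int \<lfloor>x\<rfloor> + 1"
    "real_of_int \<lfloor>y\<rfloor> \<le> y" "y < real_of_int \<lfloor>y\<rfloor> + 1"
    "x + y \<le> real_of_int \<lceil>x + y\<rceil>" "real_of_int \<lceil>x + y\<rceil> < x + y + 1"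
    by linarith+
  then have "-3 < \<lfloor>x\<rfloor> + \<lfloor>y\<rfloor> - \<lceil>x + y\<rceil>" "\<lfloor>x\<rfloor> + \<lfloor>y\<rfloor> - \<lceil>x + y\<rceil> < 1"
    by linarith+
  then show ?thesis
    by linarith
qed

lemma bounded_div_real_tendsto_zero:
  fixes f :: "nat \<Rightarrow> real"
  assumes "\<And>n. 0 \<le> f n" and "\<And>n. f n \<le> C"
  shows "(\<lambda>n. f n / real n) \<longlonglongrightarrow> 0"
proof (rule tendsto_sandwich[of "\<lambda>n. 0" _ _ "\<lambda>n. C / real n"])
  show "\<forall>\<^sub>F n in sequentially. 0 \<le> f n / real n"
    using assms(1) by simp
  show "\<forall>\<^sub>F n in sequentially. f n / real n \<le> C / real n"
    using assms(2) by (simp add: divide_right_mono)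
qed (auto intro: lim_const_over_n)

lemma in_AG_append [simp]: "in_AG G (v @ w) \<longleftrightarrow> in_AG G v \<and> in_AG G w"
  by (auto simp: in_AG_def)

lemma in_AG_word_scale [simp]: "in_AG G (word_scale c w) \<longleftrightarrow> in_AG G w"
  by (auto simp: in_AG_def word_scale_def)

lemma in_AG_word_bar [simp]: "in_AG G (word_bar w) \<longleftrightarrow> in_AG G w"
  by (auto simp: in_AG_def word_bar_def)

context group
begin

lemma word_eval_closed: "in_AG G w \<Longrightarrow> word_eval G w n \<in> carrier G"
  unfolding word_eval_def in_AG_def by (rule gprod_closed) auto

lemma word_eval_append:
  "in_AG G v \<Longrightarrow> in_AG G w \<Longrightarrow> word_eval G (v @ w) n = word_eval G v n \<otimes> word_eval G w n"
  unfolding word_eval_def in_AG_def map_append by (rule gprod_append) auto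

lemma word_eval_word_scale:
  "word_eval G (word_scale c w) n = gprod G (map (\<lambda>(g, s). g [^] \<lfloor>c * s * real n\<rfloor>) w)"
  by (simp add: word_eval_def word_scale_def case_prod_unfold o_def mult.assoc)

lemma word_eval_word_bar:
  assumes "in_AG G w"
  shows "word_eval G (word_bar w) n = inv (gprod G (map (\<lambda>(g, s). g [^] \<lceil>s * real n\<rceil>) w))"
proof -
  have "word_eval G (word_bar w) n = gprod G (rev (map (\<lambda>(g, s). g [^] \<lfloor>- s * real n\<rfloor>) w))"
    by (simp add: word_eval_def word_bar_def rev_map case_prod_unfold o_def)
  also have "\<dots> = inv (gprod G (map (\<lambda>x. inv x) (map (\<lambda>(g, s). g [^] \<lfloor>- s * real n\<rfloor>) w)))"
    using assms by (intro gprod_rev) (auto simp: in_AG_def)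
  also have "map (\<lambda>x. inv x) (map (\<lambda>(g, s). g [^] \<lfloor>- s * real n\<rfloor>) w) = map (\<lambda>(g, s). g [^] \<lceil>s * real n\<rceil>) w"
    using assms by (auto simp: in_AG_def ceiling_def int_pow_neg)
  finally show ?thesis .
qed

end

locale pseudo_normed_group = group G for G :: "('a, 'b) monoid_scheme" (structure) +
  fixes \<nu> :: "'a \<Rightarrow> real"
  assumes conj_inv_pseudo_norm: "conj_inv_pseudo_norm G \<nu>"
begin

lemma norm_nonneg: "f \<in> carrier G \<Longrightarrow> 0 \<le> \<nu> f"
  and norm_one [simp]: "\<nu> \<one> = 0"
  and norm_inv: "f \<in> carrier G \<Longrightarrow> \<nu> (inv f) = \<nu> f"
  and norm_mult_le: "f \<in> carrier G \<Longrightarrow> g \<in> carrier G \<Longrightarrow> \<nu> (f \<otimes> g) \<le> \<nu> f + \<nu> g"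
  and norm_conj: "f \<in> carrier G \<Longrightarrow> g \<in> carrier G \<Longrightarrow> \<nu> (g \<otimes> f \<otimes> inv g) = \<nu> f"
  using conj_inv_pseudo_norm unfolding conj_inv_pseudo_norm_def by (blast, blast, metis, blast, blast)

lemma norm_nat_pow_le: "g \<in> carrier G \<Longrightarrow> \<nu> (g [^] (k::nat)) \<le> k * \<nu> g"
proof (induction k)
  case (Suc k)
  then have "\<nu> (g [^] Suc k) \<le> \<nu> (g [^] k) + \<nu> g"
    by (simp add: norm_mult_le)
  with Suc show ?case
    by (simp add: algebra_simps)
qed simp

lemma norm_int_pow_le:
  assumes g: "g \<in> carrier G"
  shows "\<nu> (g [^] k) \<le> real_of_int \<bar>k\<bar> * \<nu> g"
proof -
  have "\<nu> (g [^] k) = \<nu> (g [^] nat \<bar>k\<bar>)"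
  proof (cases "k \<ge> 0")
    case True
    then show ?thesis
      by (metis int_pow_int nat_0_le abs_of_nonneg)
  next
    case False
    then have "g [^] k = inv (g [^] nat \<bar>k\<bar>)"
      using int_pow_neg_int[OF g, of "nat \<bar>k\<bar>"] by simp
    with g show ?thesis
      by (simp add: norm_inv)
  qed
  also have "\<dots> \<le> \<bar>k\<bar> * \<nu> g"
    using norm_nat_pow_le[OF g, of "nat \<bar>k\<bar>"] by simp
  finally show ?thesis .
qed

lemma norm_commutator_le:
  assumes "x \<in> carrier G" "y \<in> carrier G"
  shows "\<nu> (x \<otimes> y \<otimes> inv x \<otimes> inv y) \<le> 2 * \<nu> y"
proof -
  have "\<nu> (x \<otimes> y \<otimes> inv x \<otimes> inv y) \<le> \<nu> (x \<otimes> y \<otimes> inv x) + \<nu> (inv y)"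
    using assms by (simp add: norm_mult_le)
  with assms show ?thesis
    by (simp add: norm_conj norm_inv)
qed

lemma norm_commutator_le_displaced:
  assumes x: "x \<in> carrier G" and y: "y \<in> carrier G" and t: "t \<in> carrier G"
    and comm: "conjg G t y \<otimes> x = x \<otimes> conjg G t y"
  shows "\<nu> (x \<otimes> y \<otimes> inv x \<otimes> inv y) \<le> 4 * \<nu> t"
proof -
  \<comment> \<open>Since \<open>t y t\<inverse>\<close> commutes with \<open>x\<close>, \<open>[x, y] = [x, z]\<close> for the commutator \<open>z = [y, t]\<close>.\<close>
  define z where "z = y \<otimes> t \<otimes> inv y \<otimes> inv t"
  have z: "z \<in> carrier G"
    using t y by (simp add: z_def)
  define c where "c = conjg G t y"
  have c: "c \<in> carrier G"
    using t y by (simp add: c_def conjg_def)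
  have z_eq: "z = y \<otimes> inv c"
    using t y by (simp add: z_def c_def conjg_def inv_mult_group m_assoc)
  have comm_inv: "inv c \<otimes> inv x = inv x \<otimes> inv c"
    using comm x c unfolding c_def[symmetric] by (simp add: inv_mult_group[symmetric])
  have "x \<otimes> z \<otimes> inv x \<otimes> inv z = x \<otimes> y \<otimes> (inv c \<otimes> inv x) \<otimes> c \<otimes> inv y"
    using x y c by (simp add: z_eq inv_mult_group m_assoc)
  also have "\<dots> = x \<otimes> y \<otimes> inv x \<otimes> (inv c \<otimes> c) \<otimes> inv y"
    using x y c by (simp add: comm_inv m_assoc)
  finally have "x \<otimes> y \<otimes> inv x \<otimes> inv y = x \<otimes> z \<otimes> inv x \<otimes> inv z"
    using x y c by simp
  also have "\<nu> \<dots> \<le> 2 * \<nu> z"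
    using x z by (rule norm_commutator_le)
  also have "\<nu> z \<le> 2 * \<nu> t"
    unfolding z_def using y t by (rule norm_commutator_le)
  finally show ?thesis
    by simp
qed

lemma norm_pow_products_le:
  fixes xs :: "'c list" and g :: "'c \<Rightarrow> 'a" and a b d :: "'c \<Rightarrow> int"
  assumes L: "subgroup L G" and t: "t \<in> carrier G" and disp: "displaces t L"
    and gL: "g ` set xs \<subseteq> L"
  shows "\<nu> (gprod G (map (\<lambda>i. g i [^] a i) xs) \<otimes> gprod G (map (\<lambda>i. g i [^] b i) xs)
            \<otimes> inv (gprod G (map (\<lambda>i. g i [^] d i) xs)))
         \<le> (\<Sum>i\<leftarrow>xs. 4 * \<nu> t + \<bar>a i + b i - d i\<bar> * \<nu> (g i))"
  using gL
proof (induction xs)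
  case Nil
  then show ?case
    by simp
next
  case (Cons i xs)
  have prod_in_L: "gprod G (map (\<lambda>i. g i [^] e i) xs) \<in> L" for e :: "'c \<Rightarrow> int"
    using Cons.prems by (intro subgroup_gprod_closed[OF L]) (auto intro!: subgroup_int_pow_closed[OF L] simp: image_subset_iff)
  define A where "A = gprod G (map (\<lambda>i. g i [^] a i) xs)"
  define B where "B = gprod G (map (\<lambda>i. g i [^] b i) xs)"
  define D where "D = gprod G (map (\<lambda>i. g i [^] d i) xs)"
  have AL: "A \<in> L" and ABD: "A \<in> carrier G" "B \<in> carrier G" "D \<in> carrier G"
    using prod_in_L subgroup.subset[OF L] by (auto simp: A_def B_def D_def)
  define x where "x = g i"
  have xL: "x \<in> L"
    using Cons.prems by (simp add: x_def)
  then have x: "x \<in> carrier G"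
    using subgroup.subset[OF L] by blast
  define p q u where "p = x [^] a i" and "q = x [^] b i" and "u = x [^] d i"
  have pqu: "p \<in> carrier G" "q \<in> carrier G" "u \<in> carrier G"
    using x by (simp_all add: p_def q_def u_def)
  have qL: "inv q \<in> L"
    unfolding q_def by (intro subgroup.m_inv_closed[OF L] subgroup_int_pow_closed[OF L xL])
  have "x [^] (a i + b i - d i) = x [^] (- d i + a i + b i)"
    by (simp add: algebra_simps)
  then have r: "x [^] (a i + b i - d i) = inv u \<otimes> p \<otimes> q"
    using x by (simp only: p_def q_def u_def int_pow_mult int_pow_neg)
  define r C where "r = x [^] (a i + b i - d i)" and "C = inv q \<otimes> A \<otimes> inv (inv q) \<otimes> inv A"
  have rC: "r \<in> carrier G" "C \<in> carrier G"
    using x pqu ABD by (simp_all add: r_def C_def)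
  \<comment> \<open>Conjugating by \<open>u\<inverse>\<close> splits off a short power of \<open>x\<close> and a commutator of two elements of \<open>L\<close>.\<close>
  have "inv u \<otimes> (p \<otimes> A \<otimes> (q \<otimes> B) \<otimes> inv (u \<otimes> D)) \<otimes> inv (inv u) = r \<otimes> C \<otimes> (A \<otimes> B \<otimes> inv D)"
    using pqu ABD by (simp add: r_def C_def r m_assoc inv_mult_group r_inv_cancel_left l_inv_cancel_left)
  then have "\<nu> (p \<otimes> A \<otimes> (q \<otimes> B) \<otimes> inv (u \<otimes> D)) = \<nu> (r \<otimes> C \<otimes> (A \<otimes> B \<otimes> inv D))"
    using pqu ABD norm_conj[of "p \<otimes> A \<otimes> (q \<otimes> B) \<otimes> inv (u \<otimes> D)" "inv u"] by simp
  also have "\<dots> \<le> \<nu> r + \<nu> C + \<nu> (A \<otimes> B \<otimes> inv D)"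
    using rC ABD norm_mult_le[of "r \<otimes> C" "A \<otimes> B \<otimes> inv D"] norm_mult_le[of r C] by simp
  also have "\<nu> r \<le> \<bar>a i + b i - d i\<bar> * \<nu> x"
    unfolding r_def using x by (rule norm_int_pow_le)
  also have "\<nu> C \<le> 4 * \<nu> t"
    unfolding C_def using qL AL disp subgroup.subset[OF L]
    by (intro norm_commutator_le_displaced t) (auto simp: displaces_def)
  also have "\<nu> (A \<otimes> B \<otimes> inv D) \<le> (\<Sum>i\<leftarrow>xs. 4 * \<nu> t + \<bar>a i + b i - d i\<bar> * \<nu> (g i))"
    using Cons by (simp add: A_def B_def D_def)
  finally show ?case
    by (simp add: p_def q_def u_def x_def A_def B_def D_def)
qed


lemma norm_word_eval_le:
  fixes w :: "'a word" and l1 l2 :: real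
  assumes L: "subgroup L G" and t: "t \<in> carrier G" and disp: "displaces t L"
    and wL: "fst ` set w \<subseteq> L"
  shows "\<nu> (word_eval G (word_bar (word_scale (l1 + l2) w) @ word_scale l1 w @ word_scale l2 w) n)
    \<le> (\<Sum>p\<leftarrow>w. 4 * \<nu> t + 2 * \<nu> (fst p))"
proof -
  have wG: "fst ` set w \<subseteq> carrier G"
    using wL subgroup.subset[OF L] by blast
  then have w: "in_AG G w"
    by (auto simp: in_AG_def)
  define a b d where "a = (\<lambda>p::'a \<times> real. \<lfloor>l1 * snd p * real n\<rfloor>)"
    and "b = (\<lambda>p::'a \<times> real. \<lfloor>l2 * snd p * real n\<rfloor>)"
    and "d = (\<lambda>p::'a \<times> real. \<lceil>(l1 + l2) * snd p * real n\<rceil>)"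
  define A B D where "A = gprod G (map (\<lambda>p. fst p [^] a p) w)"
    and "B = gprod G (map (\<lambda>p. fst p [^] b p) w)"
    and "D = gprod G (map (\<lambda>p. fst p [^] d p) w)"
  have ABD: "A \<in> carrier G" "B \<in> carrier G" "D \<in> carrier G"
    using wG by (auto simp: A_def B_def D_def intro!: gprod_closed int_pow_closed) force+
  have "word_eval G (word_bar (word_scale (l1 + l2) w) @ word_scale l1 w @ word_scale l2 w) n
      = inv D \<otimes> (A \<otimes> B)"
  proof -
    have "word_eval G (word_bar (word_scale (l1 + l2) w)) n = inv D"
      using w by (subst word_eval_word_bar, simp)
        (simp add: word_scale_def D_def d_def case_prod_unfold o_def mult.assoc)
    moreover have "word_eval G (word_scale l1 w) n = A" "word_eval G (word_scale l2 w) n = B"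
      by (simp_all add: word_eval_word_scale A_def B_def a_def b_def case_prod_unfold mult.assoc)
    ultimately show ?thesis
      using w by (simp add: word_eval_append)
  qed
  also have "\<nu> \<dots> = \<nu> (A \<otimes> B \<otimes> inv D)"
    using ABD norm_conj[of "inv D \<otimes> (A \<otimes> B)" D] by (simp add: m_assoc r_inv_cancel_left)
  also have "\<dots> \<le> (\<Sum>p\<leftarrow>w. 4 * \<nu> t + \<bar>a p + b p - d p\<bar> * \<nu> (fst p))"
    unfolding A_def B_def D_def using L t disp wL by (rule norm_pow_products_le)
  also have "\<dots> \<le> (\<Sum>p\<leftarrow>w. 4 * \<nu> t + 2 * \<nu> (fst p))"
  proof (rule sum_list_mono)
    fix p assume "p \<in> set w"
    then have "0 \<le> \<nu> (fst p)"
      using wG by (auto intro: norm_nonneg)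
    moreover have "\<bar>a p + b p - d p\<bar> \<le> 2"
      using floor_add_floor_minus_ceiling_bound[of "l1 * snd p * real n" "l2 * snd p * real n"]
      by (simp add: a_def b_def d_def distrib_right)
    ultimately show "4 * \<nu> t + \<bar>a p + b p - d p\<bar> * \<nu> (fst p) \<le> 4 * \<nu> t + 2 * \<nu> (fst p)"
      by (simp add: mult_right_mono)
  qed
  finally show ?thesis .
qed

end

theorem lemma3p3:
  fixes G :: "('a, 'b) monoid_scheme" and \<nu> :: "'a \<Rightarrow> real"
    and w :: "'a word" and l1 l2 :: real
  assumes "group G" and "FM G" and "conj_inv_pseudo_norm G \<nu>" and "in_AG G w"
  shows "convergent (word_seq G \<nu> (word_bar (word_scale (l1 + l2) w) @ word_scale l1 w @ word_scale l2 w))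
    \<and> word_norm G \<nu> (word_bar (word_scale (l1 + l2) w) @ word_scale l1 w @ word_scale l2 w) = 0"
proof -
  interpret pseudo_normed_group G \<nu>
    using assms(1,3) by (simp add: pseudo_normed_group_def pseudo_normed_group_axioms_def)
  obtain H where "FM_pair G H"
    using assms(2) unfolding FM_def by blast
  moreover have "set (map fst w) \<subseteq> carrier G"
    using assms(4) by (auto simp: in_AG_def)
  ultimately obtain L t where L: "subgroup L G" "t \<in> carrier G" "displaces t L" "fst ` set w \<subseteq> L"
    by (rule FM_pair_displaces) simp
  define W where "W = word_bar (word_scale (l1 + l2) w) @ word_scale l1 w @ word_scale l2 w"
  have "word_seq G \<nu> W \<longlonglongrightarrow> 0"
    unfolding word_seq_def
  proof (rule bounded_div_real_tendsto_zero)
    show "0 \<le> \<nu> (word_eval G W n)" for n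
      using assms(4) by (simp add: W_def norm_nonneg word_eval_closed)
    show "\<nu> (word_eval G W n) \<le> (\<Sum>p\<leftarrow>w. 4 * \<nu> t + 2 * \<nu> (fst p))" for n
      unfolding W_def using L by (rule norm_word_eval_le)
  qed
  then show ?thesis
    unfolding W_def[symmetric] word_norm_def by (auto intro: convergentI limI)
qed

end
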